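(* Let $d\ge3$, $h\ge1$. The group $G(d,h)$ contains a subgroup isomorphic to $(\mathbb{Z}/d\mathbb{Z})^{(d-1)^h}$.
   Context: Let $\mathcal{T}(d,h)$ be the rooted tree in which the root $0$ has $d$ children, every vertex at distance $1,\dots,h-1$ from the root has $d-1$ children, and the vertices at distance $h$ are leaves. Let $V$ be its vertex set, $A$ its adjacency matrix, $\Delta := dI-A$, and $\Lambda\subset\mathbb{Z}^V$ the lattice spanned by the rows of $\Delta$. Then $G(d,h):=\mathbb{Z}^V/\Lambda$. *)

theory Defs
  imports "HOL-Algebra.Algebra"
begin

text \<open>Vertices of the tree T(d,h), encoded as paths from the root: the root is [],
  the root has children [i] for i < d, and every vertex at depth 1..h-1 has
  children v @ [j] for j < d - 1.  Leaves are at depth h.\<close>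
definition tree_vertices :: "nat \<Rightarrow> nat \<Rightarrow> nat list set" where
  "tree_vertices d h = {xs. length xs \<le> h \<and> (xs \<noteq> [] \<longrightarrow> hd xs < d) \<and>
                             (\<forall>i \<in> set (tl xs). i < d - 1)}"

definition tree_adj :: "nat list \<Rightarrow> nat list \<Rightarrow> bool" where
  "tree_adj u v \<longleftrightarrow> (\<exists>x. v = u @ [x]) \<or> (\<exists>x. u = v @ [x])"

definition tree_A :: "nat list \<Rightarrow> nat list \<Rightarrow> int" where
  "tree_A u v = (if tree_adj u v then 1 else 0)"

definition tree_Delta :: "nat \<Rightarrow> nat list \<Rightarrow> nat list \<Rightarrow> int" where
  "tree_Delta d u v = (if u = v then int d else 0) - tree_A u v"

text \<open>The free abelian group Z^V (written multiplicatively as an HOL-Algebra monoid).\<close>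
definition ZV :: "nat \<Rightarrow> nat \<Rightarrow> (nat list \<Rightarrow> int) monoid" where
  "ZV d h = product_group (tree_vertices d h) (\<lambda>_. integer_group)"

definition tree_Lambda :: "nat \<Rightarrow> nat \<Rightarrow> (nat list \<Rightarrow> int) set" where
  "tree_Lambda d h = {f. \<exists>c :: nat list \<Rightarrow> int.
      f = (\<lambda>x \<in> tree_vertices d h. \<Sum>u \<in> tree_vertices d h. c u * tree_Delta d u x)}"

definition Gdh :: "nat \<Rightarrow> nat \<Rightarrow> (nat list \<Rightarrow> int) set monoid" where
  "Gdh d h = ZV d h Mod tree_Lambda d h"

end

theory Submission
  imports Defs
begin

text \<open>By a maximum principle \<open>\<Delta>\<close> is injective on \<open>\<int>\<^sup>V\<close>. Hence if \<open>z\<close> satisfies \<open>\<Delta>z = dz\<close>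
  (i.e. \<open>Az = 0\<close>), then \<open>dz \<in> \<Lambda>\<close>, while \<open>z = \<Delta>c \<in> \<Lambda>\<close> would give \<open>\<Delta>(z - dc) = 0\<close>, so
  \<open>z = dc\<close>. Consequently \<open>N\<close> such vectors \<open>z\<^sub>i\<close> with points \<open>p\<^sub>k\<close> satisfying
  \<open>z\<^sub>i(p\<^sub>k) = \<delta>\<^sub>i\<^sub>k\<close> span a copy of \<open>(\<int>/d\<int>)\<^sup>N\<close> in \<open>G(d,h)\<close>.
  Such vectors are differences of alternating "zigzag" functions below two sibling vertices;
  one is obtained for every vertex at even distance from the leaves that is not the last
  child of its parent, and there are \<open>(d-1)\<^sup>h\<close> of these.\<close>

definition branching :: "nat \<Rightarrow> nat list \<Rightarrow> nat" where
  "branching d x = (if x = [] then d else d - 1)"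

lemma snoc_in_tree_vertices_iff:
  "x @ [i] \<in> tree_vertices d h \<longleftrightarrow>
     x \<in> tree_vertices d h \<and> length x < h \<and> i < branching d x"
  by (cases x) (auto simp: tree_vertices_def branching_def)

lemma butlast_in_tree_vertices: "x \<in> tree_vertices d h \<Longrightarrow> butlast x \<in> tree_vertices d h"
  by (cases x rule: rev_cases) (auto simp: snoc_in_tree_vertices_iff)

lemma length_le_of_tree_vertices: "x \<in> tree_vertices d h \<Longrightarrow> length x \<le> h"
  by (simp add: tree_vertices_def)

lemma finite_tree_vertices: "finite (tree_vertices d h)"
proof (rule finite_subset)
  show "tree_vertices d h \<subseteq> {xs. set xs \<subseteq> {..<d} \<and> length xs \<le> h}"
  proof
    fix xs assume "xs \<in> tree_vertices d h"
    then show "xs \<in> {xs. set xs \<subseteq> {..<d} \<and> length xs \<le> h}"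
      by (cases xs) (auto simp: tree_vertices_def)
  qed
qed (simp add: finite_lists_length_le)

text \<open>The combination of the rows of \<open>\<Delta>\<close> with coefficients \<open>c\<close>, i.e. the general element
  of \<open>\<Lambda>\<close>; as \<open>\<Delta>\<close> is symmetric it is also \<open>\<Delta>c\<close>.\<close>
definition laplacian :: "nat \<Rightarrow> nat \<Rightarrow> (nat list \<Rightarrow> int) \<Rightarrow> nat list \<Rightarrow> int" where
  "laplacian d h c x = (\<Sum>u \<in> tree_vertices d h. c u * tree_Delta d u x)"

definition neighbour_sum :: "nat \<Rightarrow> nat \<Rightarrow> (nat list \<Rightarrow> int) \<Rightarrow> nat list \<Rightarrow> int" where
  "neighbour_sum d h c x = (if x = [] then 0 else c (butlast x)) +
      (if length x < h then (\<Sum>i<branching d x. c (x @ [i])) else 0)"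

lemma neighbours_eq:
  assumes x: "x \<in> tree_vertices d h"
  shows "{u \<in> tree_vertices d h. tree_adj u x} =
    (if x = [] then {} else {butlast x}) \<union>
    (if length x < h then (\<lambda>i. x @ [i]) ` {..<branching d x} else {})"
  (is "?L = ?R")
proof
  show "?L \<subseteq> ?R"
  proof
    fix u assume u: "u \<in> ?L"
    then consider i where "x = u @ [i]" | i where "u = x @ [i]"
      unfolding tree_adj_def by blast
    then show "u \<in> ?R"
      by cases (use u snoc_in_tree_vertices_iff[of x _ d h] in auto)
  qed
next
  show "?R \<subseteq> ?L"
  proof
    fix u assume "u \<in> ?R"
    then consider "x \<noteq> []" "u = butlast x" | i where "length x < h" "i < branching d x" "u = x @ [i]"
      by (auto split: if_splits)
    then show "u \<in> ?L"
    proof cases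
      case 1
      then have "x = u @ [last x]" by simp
      then show ?thesis using 1 x butlast_in_tree_vertices unfolding tree_adj_def by blast
    next
      case 2
      then show ?thesis using x snoc_in_tree_vertices_iff[of x i d h] unfolding tree_adj_def by blast
    qed
  qed
qed

lemma laplacian_eq:
  assumes x: "x \<in> tree_vertices d h"
  shows "laplacian d h c x = int d * c x - neighbour_sum d h c x"
proof -
  let ?V = "tree_vertices d h"
  have "c u * tree_Delta d u x = (if u = x then int d * c u else 0) - (if tree_adj u x then c u else 0)"
    for u by (auto simp: tree_Delta_def tree_A_def tree_adj_def algebra_simps)
  then have "laplacian d h c x = (\<Sum>u\<in>?V. if u = x then int d * c u else 0)
      - (\<Sum>u\<in>{u \<in> ?V. tree_adj u x}. c u)"
    unfolding laplacian_def using finite_tree_vertices by (simp add: sum_subtractf sum.inter_filter)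
  also have "(\<Sum>u\<in>{u \<in> ?V. tree_adj u x}. c u) = neighbour_sum d h c x"
  proof -
    have "(if x = [] then {} else {butlast x}) \<inter>
        (if length x < h then (\<lambda>i. x @ [i]) ` {..<branching d x} else {}) = {}"
      by (auto split: if_splits dest!: arg_cong[where f = length])
    moreover have "inj_on (\<lambda>i. x @ [i]) A" for A by (simp add: inj_on_def)
    ultimately show ?thesis
      unfolding neighbours_eq[OF x] neighbour_sum_def
      by (subst sum.union_disjoint) (simp_all add: sum.reindex)
  qed
  finally show ?thesis using x finite_tree_vertices by simp
qed

lemma laplacian_uminus: "laplacian d h (\<lambda>u. - f u) x = - laplacian d h f x"
  unfolding laplacian_def by (simp add: sum_negf)

lemma laplacian_add: "laplacian d h (\<lambda>u. f u + g u) x = laplacian d h f x + laplacian d h g x"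
  unfolding laplacian_def by (simp add: sum.distrib distrib_right)

lemma laplacian_diff: "laplacian d h (\<lambda>u. f u - g u) x = laplacian d h f x - laplacian d h g x"
  unfolding laplacian_def by (simp add: sum_subtractf left_diff_distrib)

lemma laplacian_cmult: "laplacian d h (\<lambda>u. k * f u) x = k * laplacian d h f x"
  unfolding laplacian_def by (simp add: sum_distrib_left mult.assoc)

lemma laplacian_sum:
  "laplacian d h (\<lambda>u. \<Sum>i\<in>I. q i * g i u) x = (\<Sum>i\<in>I. q i * laplacian d h (g i) x)"
  unfolding laplacian_def
  by (simp add: sum_distrib_right sum_distrib_left mult.assoc) (rule sum.swap)

lemma neighbour_sum_diff:
  "neighbour_sum d h (\<lambda>u. f u - g u) x = neighbour_sum d h f x - neighbour_sum d h g x"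
  unfolding neighbour_sum_def by (simp add: sum_subtractf)

text \<open>Maximum principle: a vertex has at most \<open>d\<close> neighbours, and only if it is not a leaf,
  so a positive maximum of a function in the kernel is attained again one level further down.\<close>
lemma laplacian_kernel_max_at_child:
  assumes d: "d \<ge> 2" and ker: "\<forall>y\<in>tree_vertices d h. laplacian d h w y = 0"
    and max: "\<forall>y\<in>tree_vertices d h. w y \<le> M" and M: "M > 0"
    and x: "x \<in> tree_vertices d h" "w x = M"
  shows "x @ [0] \<in> tree_vertices d h \<and> w (x @ [0]) = M"
proof -
  have eq: "int d * M = neighbour_sum d h w x"
    using ker x laplacian_eq[OF x(1), of w] by simp
  define p where "p = (if x = [] then 0 else w (butlast x))"
  have p: "p \<le> (if x = [] then 0 else M)"
    unfolding p_def using max butlast_in_tree_vertices[OF x(1)] by auto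
  have lh: "length x < h"
  proof (rule ccontr)
    assume "\<not> length x < h"
    then have "int d * M \<le> M" using eq p M by (auto simp: neighbour_sum_def p_def split: if_splits)
    moreover have "int d * M \<ge> 2 * M" using d M by simp
    ultimately show False using M by simp
  qed
  have children: "\<forall>i\<in>{..<branching d x}. x @ [i] \<in> tree_vertices d h"
    using x(1) lh by (simp add: snoc_in_tree_vertices_iff)
  have zero_child: "0 < branching d x" using d by (simp add: branching_def)
  have "w (x @ [0]) = M"
  proof (rule ccontr)
    assume "w (x @ [0]) \<noteq> M"
    have "(\<Sum>i<branching d x. w (x @ [i])) < (\<Sum>i<branching d x. M)"
    proof (rule sum_strict_mono_ex1)
      show "\<forall>i\<in>{..<branching d x}. w (x @ [i]) \<le> M" using max children by blast
      show "\<exists>i\<in>{..<branching d x}. w (x @ [i]) < M"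
        using \<open>w (x @ [0]) \<noteq> M\<close> max children zero_child by (intro bexI[of _ 0]) force+
    qed simp
    moreover have "(if x = [] then 0 else M) + (\<Sum>i<branching d x. M) = int d * M"
      using d by (auto simp: branching_def of_nat_diff algebra_simps)
    moreover have "neighbour_sum d h w x = p + (\<Sum>i<branching d x. w (x @ [i]))"
      unfolding neighbour_sum_def p_def using lh by simp
    ultimately show False using eq p by linarith
  qed
  then show ?thesis using children zero_child by blast
qed

lemma laplacian_kernel_nonpos:
  assumes d: "d \<ge> 2" and ker: "\<forall>y\<in>tree_vertices d h. laplacian d h w y = 0"
    and x: "x \<in> tree_vertices d h"
  shows "w x \<le> 0"
proof (rule ccontr)
  let ?V = "tree_vertices d h"
  define M where "M = Max (w ` ?V)"
  have max: "\<forall>y\<in>?V. w y \<le> M"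
    unfolding M_def using finite_tree_vertices by simp
  assume "\<not> w x \<le> 0"
  then have M: "M > 0" using max x by (meson not_le order_less_le_trans)
  have "M \<in> w ` ?V"
    unfolding M_def using finite_tree_vertices x by (intro Max_in) auto
  then obtain xm where xm: "xm \<in> ?V" "w xm = M" by auto
  have descent: "xm @ replicate n 0 \<in> ?V \<and> w (xm @ replicate n 0) = M" for n
  proof (induction n)
    case (Suc n)
    have "xm @ replicate (Suc n) 0 = (xm @ replicate n 0) @ [0]"
      by (simp add: replicate_append_same)
    then show ?case
      using laplacian_kernel_max_at_child[OF d ker max M, of "xm @ replicate n 0"] Suc.IH by simp
  qed (use xm in simp)
  then show False using length_le_of_tree_vertices[of "xm @ replicate (Suc h) 0" d h] by fastforce
qed

lemma laplacian_kernel_trivial: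
  assumes d: "d \<ge> 2" and ker: "\<forall>y\<in>tree_vertices d h. laplacian d h w y = 0"
    and x: "x \<in> tree_vertices d h"
  shows "w x = 0"
  using laplacian_kernel_nonpos[OF d ker x]
    laplacian_kernel_nonpos[OF d _ x, of "\<lambda>u. - w u"] ker
  by (simp add: laplacian_uminus)

lemma butlast_ne_append: "v \<noteq> [] \<Longrightarrow> butlast v \<noteq> v @ s"
proof
  assume "v \<noteq> []" "butlast v = v @ s"
  then have "length v - 1 = length v + length s" by (metis length_append length_butlast)
  with \<open>v \<noteq> []\<close> show False by (cases v) auto
qed

fun zigzag_weight :: "nat \<Rightarrow> nat list \<Rightarrow> int" where
  "zigzag_weight e [] = 1"
| "zigzag_weight e [i] = 0"
| "zigzag_weight e (i # j # r) = (if j = e then - zigzag_weight e r else 0)"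

lemma zigzag_weight_odd: "odd (length r) \<Longrightarrow> zigzag_weight e r = 0"
  by (induction e r rule: zigzag_weight.induct) auto

lemma zigzag_weight_append_pair:
  "even (length r) \<Longrightarrow> zigzag_weight e (r @ [k, i]) = (if i = e then - zigzag_weight e r else 0)"
  by (induction e r rule: zigzag_weight.induct) auto

lemma zigzag_weight_nonzero:
  "zigzag_weight e r \<noteq> 0 \<Longrightarrow> r = [] \<or> (length r \<ge> 2 \<and> last r = e)"
  by (induction e r rule: zigzag_weight.induct) (auto split: if_splits)

text \<open>Supported on the descendants \<open>v @ r\<close> of \<open>v\<close> at even distance whose every second step
  goes to child \<open>d - 2\<close>, the last child of a non-root vertex, with alternating signs. At a
  descendant at odd distance the value of its parent is cancelled by that of its last child,
  so only the parent of \<open>v\<close> sees a nonzero neighbour sum (provided the leaves lie at even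
  distance from \<open>v\<close>, so that no odd descendant is a leaf).\<close>
definition zigzag :: "nat \<Rightarrow> nat list \<Rightarrow> nat list \<Rightarrow> int" where
  "zigzag d v u =
     (if take (length v) u = v then zigzag_weight (d - 2) (drop (length v) u) else 0)"

lemma zigzag_append [simp]: "zigzag d v (v @ r) = zigzag_weight (d - 2) r"
  by (simp add: zigzag_def)

lemma zigzag_outside: "(\<And>r. u \<noteq> v @ r) \<Longrightarrow> zigzag d v u = 0"
  by (metis append_take_drop_id zigzag_def)

lemma neighbour_sum_zigzag_outside:
  assumes v: "v \<in> tree_vertices d h" and x: "\<And>r. x \<noteq> v @ r"
  shows "neighbour_sum d h (zigzag d v) x = (if v \<noteq> [] \<and> x = butlast v then 1 else 0)"
proof -
  have parent: "x \<noteq> [] \<Longrightarrow> zigzag d v (butlast x) = 0"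
    using x by (intro zigzag_outside) (metis append.assoc append_butlast_last_id)
  have child: "zigzag d v (x @ [i]) = (if v = x @ [i] then 1 else 0)" for i
  proof (cases "v = x @ [i]")
    case False
    then have "x @ [i] \<noteq> v @ r" for r
      using x by (cases r rule: rev_cases) auto
    then show ?thesis using False by (simp add: zigzag_outside)
  qed (simp add: zigzag_def)
  show ?thesis
  proof (cases "v \<noteq> [] \<and> x = butlast v")
    case True
    then obtain j where vj: "v = x @ [j]" by (metis append_butlast_last_id)
    then have "length x < h" "j < branching d x"
      using v by (simp_all add: snoc_in_tree_vertices_iff)
    then show ?thesis using parent child vj by (simp add: neighbour_sum_def)
  next
    case False
    then have "v \<noteq> x @ [i]" for i by auto
    then show ?thesis unfolding if_not_P[OF False] using parent child by (simp add: neighbour_sum_def)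
  qed
qed

lemma neighbour_sum_zigzag_even:
  assumes "even (length r)"
  shows "neighbour_sum d h (zigzag d v) (v @ r) = 0"
proof -
  have parent: "zigzag d v (butlast (v @ r)) = 0" if "v @ r \<noteq> []"
  proof (cases "r = []")
    case True
    then have "butlast v \<noteq> v @ s" for s using that by (simp add: butlast_ne_append)
    then show ?thesis using True by (simp add: zigzag_outside)
  next
    case False
    then show ?thesis using assms by (simp add: butlast_append zigzag_weight_odd)
  qed
  have "zigzag d v (v @ r @ [i]) = 0" for i
    using assms by (simp add: zigzag_weight_odd)
  then show ?thesis using parent by (simp add: neighbour_sum_def)
qed

lemma neighbour_sum_zigzag_odd:
  assumes d: "d \<ge> 2" and x: "v @ r @ [k] \<in> tree_vertices d h"
    and r: "even (length r)" and parity: "even (h - length v)"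
  shows "neighbour_sum d h (zigzag d v) (v @ r @ [k]) = 0"
proof -
  have "length (v @ r @ [k]) \<noteq> h" using r parity by auto
  then have has_children: "length (v @ r @ [k]) < h"
    using length_le_of_tree_vertices[OF x] by linarith
  have "(\<Sum>i<branching d (v @ r @ [k]). zigzag d v ((v @ r @ [k]) @ [i])) =
      (\<Sum>i<d - 1. if i = d - 2 then - zigzag_weight (d - 2) r else 0)"
    using r by (simp add: branching_def zigzag_weight_append_pair)
  also have "\<dots> = - zigzag_weight (d - 2) r" using d by simp
  finally show ?thesis
    using has_children by (simp add: neighbour_sum_def butlast_append)
qed

lemma neighbour_sum_zigzag:
  assumes d: "d \<ge> 2" and v: "v \<in> tree_vertices d h" and parity: "even (h - length v)"
    and x: "x \<in> tree_vertices d h"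
  shows "neighbour_sum d h (zigzag d v) x = (if v \<noteq> [] \<and> x = butlast v then 1 else 0)"
proof (cases "\<exists>s. x = v @ s")
  case True
  then obtain s where s: "x = v @ s" by blast
  then have "\<not> (v \<noteq> [] \<and> x = butlast v)" by (metis butlast_ne_append)
  moreover have "neighbour_sum d h (zigzag d v) x = 0"
  proof (cases "even (length s)")
    case True
    then show ?thesis using s by (simp add: neighbour_sum_zigzag_even)
  next
    case False
    then obtain r k where "s = r @ [k]" "even (length r)" by (cases s rule: rev_cases) auto
    then show ?thesis using neighbour_sum_zigzag_odd[OF d _ _ parity] s x by simp
  qed
  ultimately show ?thesis by simp
qed (use neighbour_sum_zigzag_outside[OF v] in blast)

definition last_sibling :: "nat \<Rightarrow> nat list \<Rightarrow> nat list" where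
  "last_sibling d v = butlast v @ [branching d (butlast v) - 1]"

definition not_last_child :: "nat \<Rightarrow> nat list \<Rightarrow> bool" where
  "not_last_child d v \<longleftrightarrow> v = [] \<or> Suc (last v) < branching d (butlast v)"

text \<open>Killed by the adjacency matrix, hence \<open>\<Delta>\<close> acts on it as multiplication by \<open>d\<close>: the
  zigzag functions of two siblings have the same neighbour sums.\<close>
definition zigzag_diff :: "nat \<Rightarrow> nat list \<Rightarrow> nat list \<Rightarrow> int" where
  "zigzag_diff d v =
     (if v = [] then zigzag d [] else (\<lambda>u. zigzag d v u - zigzag d (last_sibling d v) u))"

lemma last_sibling_in_tree_vertices:
  assumes v: "v \<in> tree_vertices d h" and "v \<noteq> []"
  shows "last_sibling d v \<in> tree_vertices d h"
proof -
  have "butlast v @ [last v] \<in> tree_vertices d h" using assms by simp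
  then show ?thesis unfolding last_sibling_def snoc_in_tree_vertices_iff by auto
qed

lemma laplacian_zigzag_diff:
  assumes d: "d \<ge> 2" and v: "v \<in> tree_vertices d h" and parity: "even (h - length v)"
    and x: "x \<in> tree_vertices d h"
  shows "laplacian d h (zigzag_diff d v) x = int d * zigzag_diff d v x"
proof -
  have "neighbour_sum d h (zigzag_diff d v) x = 0"
  proof (cases "v = []")
    case True
    then show ?thesis using neighbour_sum_zigzag[OF d v parity x] by (simp add: zigzag_diff_def)
  next
    case False
    then have "last_sibling d v \<in> tree_vertices d h" "length (last_sibling d v) = length v"
      using last_sibling_in_tree_vertices[OF v] by (auto simp: last_sibling_def)
    then show ?thesis
      using False neighbour_sum_zigzag[OF d v parity x] neighbour_sum_zigzag[OF d _ _ x, of "last_sibling d v"]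
        parity by (simp add: zigzag_diff_def neighbour_sum_diff last_sibling_def)
  qed
  then show ?thesis by (simp add: laplacian_eq[OF x])
qed

lemma zigzag_at_not_last_child:
  assumes u: "not_last_child d u"
  shows "zigzag d v u = (if u = v then 1 else 0)"
proof (cases "\<exists>r. u = v @ r")
  case True
  then obtain r where r: "u = v @ r" by blast
  have "r = []" if nz: "zigzag_weight (d - 2) r \<noteq> 0"
  proof (rule ccontr)
    assume "r \<noteq> []"
    then have r2: "length r \<ge> 2" "last r = d - 2" using zigzag_weight_nonzero[OF nz] by blast+
    obtain ys y where ys: "r = ys @ [y]" using \<open>r \<noteq> []\<close> by (cases r rule: rev_cases) auto
    then have "ys \<noteq> []" using r2 by auto
    then have "butlast u \<noteq> []" "last u = d - 2" using r r2 ys by (simp_all add: butlast_append)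
    then show False using u by (auto simp: not_last_child_def branching_def)
  qed
  then show ?thesis using r by auto
qed (auto simp: zigzag_outside)

lemma zigzag_diff_at_not_last_child:
  assumes u: "not_last_child d u"
  shows "zigzag_diff d v u = (if u = v then 1 else 0)"
proof -
  have "u \<noteq> last_sibling d v"
    using u by (auto simp: not_last_child_def last_sibling_def)
  then have "zigzag d (last_sibling d v) u = 0" by (simp add: zigzag_at_not_last_child[OF u])
  moreover have "zigzag_diff d v u = zigzag d v u - (if v = [] then 0 else zigzag d (last_sibling d v) u)"
    by (simp add: zigzag_diff_def)
  ultimately show ?thesis by (simp add: zigzag_at_not_last_child[OF u])
qed

text \<open>Each pivot \<open>v\<close> carries the eigenvector \<open>zigzag_diff d v\<close>, and these vectors are dual
  to the pivots.\<close>
definition pivots :: "nat \<Rightarrow> nat \<Rightarrow> nat list set" where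
  "pivots d h = {v \<in> tree_vertices d h. even (h - length v) \<and> not_last_child d v}"

lemma pivots_0: "pivots d 0 = {[]}"
  by (auto simp: pivots_def tree_vertices_def not_last_child_def)

lemma pivots_1: "pivots d 1 = (\<lambda>i. [i]) ` {..<d - 1}"
  by (auto simp: pivots_def tree_vertices_def not_last_child_def branching_def le_Suc_eq
      length_Suc_conv)

lemma pivots_add_2:
  "pivots d (h + 2) =
     pivots d h \<union> {v \<in> tree_vertices d (h + 2). length v = h + 2 \<and> not_last_child d v}"
  by (auto simp: pivots_def tree_vertices_def le_Suc_eq)

lemma bottom_pivots_eq:
  "{v \<in> tree_vertices d (t + 2). length v = t + 2 \<and> not_last_child d v} =
     (\<lambda>(a, m, b). a # m @ [b]) ` ({..<d} \<times> {m. set m \<subseteq> {..<d - 1} \<and> length m = t} \<times> {..<d - 2})"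
  (is "?L = ?R")
proof
  show "?L \<subseteq> ?R"
  proof
    fix v assume v: "v \<in> ?L"
    then obtain a u where au: "v = a # u" "length u = Suc t" by (auto simp: length_Suc_conv)
    then obtain m b where mb: "u = m @ [b]" by (cases u rule: rev_cases) auto
    have "a < d" "set m \<subseteq> {..<d - 1}" "length m = t" "Suc b < d - 1"
      using v au mb by (auto simp: tree_vertices_def not_last_child_def branching_def butlast_append)
    then show "v \<in> ?R" using au mb by (intro image_eqI[of _ _ "(a, m, b)"]) auto
  qed
qed (auto simp: tree_vertices_def not_last_child_def branching_def butlast_append)

lemma card_bottom_pivots:
  "card {v \<in> tree_vertices d (t + 2). length v = t + 2 \<and> not_last_child d v} =
     d * (d - 1) ^ t * (d - 2)"
proof -
  have "inj_on (\<lambda>(a, m, b). a # m @ [b])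
      ({..<d} \<times> {m. set m \<subseteq> {..<d - 1} \<and> length m = t} \<times> {..<d - 2})"
    by (auto simp: inj_on_def)
  moreover have "card {m. set m \<subseteq> {..<d - 1} \<and> length m = t} = (d - 1) ^ t"
    using card_lists_length_eq[of "{..<d - 1}" t] by simp
  ultimately show ?thesis unfolding bottom_pivots_eq by (simp add: card_image card_cartesian_product)
qed

lemma finite_pivots: "finite (pivots d h)"
  using finite_tree_vertices by (simp add: pivots_def)

lemma card_pivots:
  assumes d: "d \<ge> 2"
  shows "card (pivots d h) = (d - 1) ^ h"
proof (induction h rule: nat_induct2)
  case 0
  show ?case by (simp add: pivots_0)
next
  case 1
  show ?case unfolding pivots_1 by (simp add: card_image inj_on_def)
next
  case (step h)
  have "pivots d h \<inter> {v \<in> tree_vertices d (h + 2). length v = h + 2 \<and> not_last_child d v} = {}"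
    by (auto simp: pivots_def tree_vertices_def)
  then have "card (pivots d (h + 2)) = (d - 1) ^ h + d * (d - 1) ^ h * (d - 2)"
    unfolding pivots_add_2 using finite_pivots finite_tree_vertices step card_bottom_pivots[of d h]
    by (simp add: card_Un_disjoint)
  also have "\<dots> = (d - 1) ^ (h + 2)"
  proof -
    obtain n where "d = n + 2" using d by (metis add.commute le_add_diff_inverse)
    then show ?thesis by (simp add: algebra_simps power2_eq_square)
  qed
  finally show ?case .
qed

lemma (in subgroup) rcos_eq_iff:
  assumes G: "group G" and x: "x \<in> carrier G" and y: "y \<in> carrier G"
  shows "H #> x = H #> y \<longleftrightarrow> x \<otimes> inv y \<in> H"
proof
  assume "H #> x = H #> y"
  then have "x \<in> H #> y" using group.rcos_self[OF G x subgroup_axioms] by simp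
  then show "x \<otimes> inv y \<in> H" using rcos_module_imp[OF G y] by blast
next
  assume "x \<otimes> inv y \<in> H"
  then have "x \<in> H #> y" using rcos_module_rev[OF G y x] by blast
  then show "H #> x = H #> y" using group.repr_independence[OF G _ y subgroup_axioms] by simp
qed

lemma (in group_hom) subgroup_iso_of_inj:
  assumes "inj_on h (carrier G)"
  shows "\<exists>K. subgroup K H \<and> H\<lparr>carrier := K\<rparr> \<cong> G"
proof -
  have "h \<in> iso G (H\<lparr>carrier := h ` carrier G\<rparr>)"
    using assms by (auto simp: iso_def hom_def bij_betw_def)
  then have "H\<lparr>carrier := h ` carrier G\<rparr> \<cong> G"
    using G.iso_sym by (auto simp: is_iso_def)
  then show ?thesis using img_is_subgroup by blast
qed

lemma (in normal) subgroup_iso_in_FactGroup: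
  assumes P: "group P" and f: "f \<in> carrier P \<rightarrow> carrier G"
    and mult_mod: "\<And>a b. a \<in> carrier P \<Longrightarrow> b \<in> carrier P \<Longrightarrow>
        f (a \<otimes>\<^bsub>P\<^esub> b) \<otimes> inv (f a \<otimes> f b) \<in> H"
    and inj_mod: "\<And>a b. a \<in> carrier P \<Longrightarrow> b \<in> carrier P \<Longrightarrow>
        f a \<otimes> inv (f b) \<in> H \<Longrightarrow> a = b"
  shows "\<exists>K. subgroup K (G Mod H) \<and> (G Mod H)\<lparr>carrier := K\<rparr> \<cong> P"
proof -
  define \<phi> where "\<phi> a = H #> f a" for a
  have "\<phi> \<in> hom P (G Mod H)"
  proof (rule homI)
    fix a assume "a \<in> carrier P"
    then show "\<phi> a \<in> carrier (G Mod H)"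
      using f r_coset_hom_Mod by (auto simp: \<phi>_def hom_def)
  next
    fix a b assume ab: "a \<in> carrier P" "b \<in> carrier P"
    then have "a \<otimes>\<^bsub>P\<^esub> b \<in> carrier P" using P by (simp add: group.is_monoid monoid.m_closed)
    then have "\<phi> (a \<otimes>\<^bsub>P\<^esub> b) = H #> (f a \<otimes> f b)"
      unfolding \<phi>_def using ab f mult_mod by (subst rcos_eq_iff[OF is_group]) auto
    also have "\<dots> = \<phi> a \<otimes>\<^bsub>G Mod H\<^esub> \<phi> b"
      using ab f by (simp add: \<phi>_def FactGroup_def rcos_sum Pi_iff)
    finally show "\<phi> (a \<otimes>\<^bsub>P\<^esub> b) = \<phi> a \<otimes>\<^bsub>G Mod H\<^esub> \<phi> b" .
  qed
  moreover have "inj_on \<phi> (carrier P)"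
    using f inj_mod rcos_eq_iff[OF is_group] by (simp add: inj_on_def \<phi>_def Pi_iff)
  ultimately show ?thesis
    using P factorgroup_is_group by (intro group_hom.subgroup_iso_of_inj) (auto simp: group_hom_def group_hom_axioms_def)
qed

lemma carrier_ZV: "carrier (ZV d h) = (\<Pi>\<^sub>E i\<in>tree_vertices d h. UNIV)"
  by (simp add: ZV_def)

lemma mult_ZV: "x \<otimes>\<^bsub>ZV d h\<^esub> y = (\<lambda>i\<in>tree_vertices d h. x i + y i)"
  by (simp add: ZV_def)

lemma comm_group_ZV: "comm_group (ZV d h)"
  by (rule group.group_comm_groupI) (auto simp: ZV_def add.commute)

lemma div_ZV:
  assumes "x \<in> carrier (ZV d h)" "y \<in> carrier (ZV d h)"
  shows "x \<otimes>\<^bsub>ZV d h\<^esub> inv\<^bsub>ZV d h\<^esub> y = (\<lambda>i\<in>tree_vertices d h. x i - y i)"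
  using assms by (auto simp: ZV_def inv_product_group intro!: restrict_ext)

lemma tree_Lambda_eq: "tree_Lambda d h = range (\<lambda>c. restrict (laplacian d h c) (tree_vertices d h))"
  by (auto simp: tree_Lambda_def laplacian_def[abs_def])

lemma div_ZV_in_tree_Lambda_iff:
  assumes "x \<in> carrier (ZV d h)" "y \<in> carrier (ZV d h)"
  shows "x \<otimes>\<^bsub>ZV d h\<^esub> inv\<^bsub>ZV d h\<^esub> y \<in> tree_Lambda d h \<longleftrightarrow>
    (\<exists>c. \<forall>u\<in>tree_vertices d h. x u - y u = laplacian d h c u)"
  unfolding div_ZV[OF assms] tree_Lambda_eq
  by (auto simp: fun_eq_iff restrict_def image_iff)

lemma normal_tree_Lambda: "tree_Lambda d h \<lhd> ZV d h"
proof -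
  interpret comm_group "ZV d h" by (rule comm_group_ZV)
  have "subgroup (tree_Lambda d h) (ZV d h)"
  proof (rule subgroupI)
    show "tree_Lambda d h \<subseteq> carrier (ZV d h)" by (auto simp: tree_Lambda_eq carrier_ZV)
    show "tree_Lambda d h \<noteq> {}" by (simp add: tree_Lambda_eq)
  next
    fix a assume "a \<in> tree_Lambda d h"
    then obtain c where "a = restrict (laplacian d h c) (tree_vertices d h)"
      by (auto simp: tree_Lambda_eq)
    then have "inv\<^bsub>ZV d h\<^esub> a = restrict (laplacian d h (\<lambda>u. - c u)) (tree_vertices d h)"
      by (auto simp: ZV_def inv_product_group laplacian_uminus intro!: restrict_ext)
    then show "inv\<^bsub>ZV d h\<^esub> a \<in> tree_Lambda d h" by (simp add: tree_Lambda_eq)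
  next
    fix a b assume "a \<in> tree_Lambda d h" "b \<in> tree_Lambda d h"
    then obtain c c' where "a = restrict (laplacian d h c) (tree_vertices d h)"
      "b = restrict (laplacian d h c') (tree_vertices d h)"
      by (auto simp: tree_Lambda_eq)
    then have "a \<otimes>\<^bsub>ZV d h\<^esub> b = restrict (laplacian d h (\<lambda>u. c u + c' u)) (tree_vertices d h)"
      by (auto simp: mult_ZV laplacian_add intro!: restrict_ext)
    then show "a \<otimes>\<^bsub>ZV d h\<^esub> b \<in> tree_Lambda d h" by (simp add: tree_Lambda_eq)
  qed
  then show ?thesis by (rule subgroup_imp_normal)
qed

lemma eigvec_in_tree_Lambda_imp_multiple:
  assumes d: "d \<ge> 2"
    and eig: "\<forall>x\<in>tree_vertices d h. laplacian d h f x = int d * f x"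
    and lat: "\<forall>x\<in>tree_vertices d h. f x = laplacian d h c x"
    and x: "x \<in> tree_vertices d h"
  shows "f x = int d * c x"
proof -
  have "\<forall>y\<in>tree_vertices d h. laplacian d h (\<lambda>u. f u - int d * c u) y = 0"
    using eig lat by (simp add: laplacian_diff laplacian_cmult)
  from laplacian_kernel_trivial[OF d this x] show ?thesis by simp
qed

definition lincomb :: "nat \<Rightarrow> (nat \<Rightarrow> nat list \<Rightarrow> int) \<Rightarrow> (nat \<Rightarrow> int) \<Rightarrow> nat list \<Rightarrow> int" where
  "lincomb N z a = (\<lambda>u. \<Sum>i<N. a i * z i u)"

lemma laplacian_lincomb:
  assumes "\<And>i. i < N \<Longrightarrow> laplacian d h (z i) x = int d * z i x"
  shows "laplacian d h (lincomb N z a) x = int d * lincomb N z a x"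
  using assms by (simp add: lincomb_def laplacian_sum sum_distrib_left algebra_simps)

lemma lincomb_at_dual_point:
  assumes "\<And>i. i < N \<Longrightarrow> z i u = (if i = k then 1 else 0)" and "k < N"
  shows "lincomb N z a u = a k"
proof -
  have "lincomb N z a u = (\<Sum>i<N. if i = k then a i else 0)"
    unfolding lincomb_def using assms(1) by (intro sum.cong) auto
  then show ?thesis using assms(2) by simp
qed

lemma lincomb_add_mod:
  "lincomb N z (\<lambda>i\<in>{..<N}. (a i + b i) mod m) u =
     lincomb N z a u + lincomb N z b u - m * lincomb N z (\<lambda>i. (a i + b i) div m) u"
proof -
  have "(\<lambda>i\<in>{..<N}. (a i + b i) mod m) i * z i u =
      a i * z i u + b i * z i u - m * ((a i + b i) div m * z i u)" if "i < N" for i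
    using that by (simp add: minus_mult_div_eq_mod[symmetric] algebra_simps)
  then show ?thesis
    by (simp add: lincomb_def sum.distrib sum_subtractf sum_distrib_left)
qed

lemma Gdh_subgroup_iso_of_dual_eigvecs:
  fixes z :: "nat \<Rightarrow> nat list \<Rightarrow> int" and p :: "nat \<Rightarrow> nat list"
  assumes d: "d \<ge> 2"
    and eig: "\<And>i x. i < N \<Longrightarrow> x \<in> tree_vertices d h \<Longrightarrow> laplacian d h (z i) x = int d * z i x"
    and dual: "\<And>i k. i < N \<Longrightarrow> k < N \<Longrightarrow> z i (p k) = (if i = k then 1 else 0)"
    and p: "\<And>k. k < N \<Longrightarrow> p k \<in> tree_vertices d h"
  shows "\<exists>H. subgroup H (Gdh d h) \<and>
    (Gdh d h)\<lparr>carrier := H\<rparr> \<cong> product_group {..<N} (\<lambda>_. integer_mod_group d)"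
proof -
  let ?V = "tree_vertices d h" and ?P = "product_group {..<N} (\<lambda>_. integer_mod_group d)"
  define f where "f a = restrict (lincomb N z a) ?V" for a
  have f: "f \<in> carrier ?P \<rightarrow> carrier (ZV d h)" by (simp add: f_def carrier_ZV)
  have eig_lincomb: "\<forall>x\<in>?V. laplacian d h (lincomb N z a) x = int d * lincomb N z a x" for a
    using eig by (intro ballI laplacian_lincomb)
  have mult_mod: "f (a \<otimes>\<^bsub>?P\<^esub> b) \<otimes>\<^bsub>ZV d h\<^esub> inv\<^bsub>ZV d h\<^esub> (f a \<otimes>\<^bsub>ZV d h\<^esub> f b) \<in> tree_Lambda d h"
    for a b
  proof -
    let ?q = "\<lambda>i. (a i + b i) div int d"
    have "\<forall>u\<in>?V. f (a \<otimes>\<^bsub>?P\<^esub> b) u - (f a \<otimes>\<^bsub>ZV d h\<^esub> f b) u =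
        laplacian d h (\<lambda>u. - lincomb N z ?q u) u"
      using eig_lincomb by (simp add: f_def mult_ZV lincomb_add_mod laplacian_uminus)
    then show ?thesis by (subst div_ZV_in_tree_Lambda_iff) (auto simp: f_def carrier_ZV mult_ZV)
  qed
  have inj_mod: "a = b" if ab: "a \<in> carrier ?P" "b \<in> carrier ?P"
      and mem: "f a \<otimes>\<^bsub>ZV d h\<^esub> inv\<^bsub>ZV d h\<^esub> f b \<in> tree_Lambda d h" for a b
  proof -
    obtain c where c: "\<forall>u\<in>?V. lincomb N z a u - lincomb N z b u = laplacian d h c u"
      using mem div_ZV_in_tree_Lambda_iff[of "f a" d h "f b"] by (auto simp: f_def carrier_ZV)
    have "\<forall>x\<in>?V. laplacian d h (\<lambda>u. lincomb N z a u - lincomb N z b u) x =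
        int d * (lincomb N z a x - lincomb N z b x)"
      using eig_lincomb by (simp add: laplacian_diff algebra_simps)
    then have "a k - b k = int d * c (p k)" if "k < N" for k
      using eigvec_in_tree_Lambda_imp_multiple[OF d _ c p[OF that]] dual that
      by (simp add: lincomb_at_dual_point)
    moreover have "0 \<le> a k \<and> a k < int d \<and> 0 \<le> b k \<and> b k < int d" if "k < N" for k
      using ab d that by (auto simp: carrier_integer_mod_group PiE_iff)
    ultimately have "a k = b k" if "k < N" for k
      using that by (metis mod_eq_dvd_iff dvd_triv_left mod_pos_pos_trivial)
    then show "a = b"
      using ab by (intro extensionalityI[of _ "{..<N}"]) (simp_all add: PiE_iff)
  qed
  show ?thesis unfolding Gdh_def
  proof (rule normal.subgroup_iso_in_FactGroup[OF normal_tree_Lambda, where f = f])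
    show "group ?P" by simp
  qed (use f mult_mod inj_mod in blast)+
qed

theorem lemma6p6:
  fixes d h :: nat
  assumes "d \<ge> 3" and "h \<ge> 1"
  shows "\<exists>H. subgroup H (Gdh d h) \<and>
    (Gdh d h)\<lparr>carrier := H\<rparr> \<cong>
      product_group {..<(d - 1) ^ h} (\<lambda>_. integer_mod_group d)"
proof -
  have d: "d \<ge> 2" using assms(1) by simp
  obtain p where p: "bij_betw p {..<(d - 1) ^ h} (pivots d h)"
    using card_pivots[OF d] finite_pivots
    by (metis card_lessThan finite_lessThan finite_same_card_bij)
  then have pivot: "p k \<in> pivots d h" if "k < (d - 1) ^ h" for k
    using that by (auto simp: bij_betw_def)
  show ?thesis
  proof (rule Gdh_subgroup_iso_of_dual_eigvecs[OF d, where z = "\<lambda>i. zigzag_diff d (p i)" and p = p])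
    show "laplacian d h (zigzag_diff d (p i)) x = int d * zigzag_diff d (p i) x"
      if "i < (d - 1) ^ h" "x \<in> tree_vertices d h" for i x
      using laplacian_zigzag_diff[OF d _ _ that(2)] pivot[OF that(1)] by (simp add: pivots_def)
    show "zigzag_diff d (p i) (p k) = (if i = k then 1 else 0)"
      if "i < (d - 1) ^ h" "k < (d - 1) ^ h" for i k
      using zigzag_diff_at_not_last_child pivot[OF that(2)] p that
      by (auto simp: pivots_def bij_betw_def inj_on_def)
  qed (use pivot in \<open>auto simp: pivots_def\<close>)
qed

end
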